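(* Let $S \subseteq I_3^d$ be a nonempty set, let $x^1, x^2, x^3 : S \to \{1,2,3\}$ be functions such that for some $\alpha \in S$ the values $x^1(\alpha), x^2(\alpha), x^3(\alpha)$ are pairwise distinct, and for $k=1,2,3$ let $A_k$ be a $(d+1)$-dimensional polystochastic matrix of order $3$ with $\mathrm{supp}(A_k) = I_3^{d+1} \setminus \{(\beta, x^k(\beta)) : \beta \in S\}$. Then there is no vertex $B$ of $\Omega_3^{d+1}$ with $\mathrm{supp}(B) \subseteq \mathrm{supp}(A_1) \cap \mathrm{supp}(A_2) \cap \mathrm{supp}(A_3)$. Consequently, if $\mathcal{A}$ is a family of $(d+1)$-dimensional polystochastic matrices of order $3$ of this form indexed by a set $C$ of functions $S \to \{1,2,3\}$ such that any three distinct members of $C$ take pairwise distinct values at some $\alpha \in S$, then $\Omega_3^{d+1}$ has at least $|C|/2$ vertices.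
   Context: $I_3^m = \{1,2,3\}^m$; $(\beta,j)$ denotes the index in $I_3^{d+1}$ obtained by appending $j$ to $\beta \in I_3^d$. A $m$-dimensional matrix of order $3$ is an array indexed by $I_3^m$; a line is the set of entries obtained by fixing all but one coordinate; a matrix is polystochastic if its entries are nonnegative and each line sums to $1$; $\mathrm{supp}(A)=\{\alpha : a_\alpha \ne 0\}$. $\Omega_3^{m}$ is the polytope of $m$-dimensional polystochastic matrices of order $3$; vertices are its extreme points. Every polystochastic matrix is a convex combination with positive coefficients of vertices whose supports are contained in its support. *)

theory Defs
  imports "HOL-Analysis.Analysis" "HOL-Library.FuncSet"
begin

text \<open>Indices: I_3^m is represented as lists of length m with entries in {1,2,3};
  the index (beta, j) is beta @ [j].  An m-dimensional matrix of order 3 is a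
  real-valued function on index lists; members of the polytope are required to
  vanish outside I_3^m (so that they are genuinely arrays indexed by I_3^m).\<close>

definition idx :: "nat \<Rightarrow> nat list set" where
  "idx m = {xs. length xs = m \<and> set xs \<subseteq> {1,2,3}}"

definition polystochastic :: "nat \<Rightarrow> (nat list \<Rightarrow> real) \<Rightarrow> bool" where
  "polystochastic m A \<longleftrightarrow>
     (\<forall>\<alpha>\<in>idx m. 0 \<le> A \<alpha>) \<and>
     (\<forall>\<alpha>\<in>idx m. \<forall>i<m. (\<Sum>j\<in>{1,2,3::nat}. A (\<alpha>[i := j])) = 1)"

definition Omega3 :: "nat \<Rightarrow> (nat list \<Rightarrow> real) set" where
  "Omega3 m = {A. polystochastic m A \<and> (\<forall>\<alpha>. \<alpha> \<notin> idx m \<longrightarrow> A \<alpha> = 0)}"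

definition supp :: "nat \<Rightarrow> (nat list \<Rightarrow> real) \<Rightarrow> nat list set" where
  "supp m A = {\<alpha> \<in> idx m. A \<alpha> \<noteq> 0}"

definition vertex :: "nat \<Rightarrow> (nat list \<Rightarrow> real) \<Rightarrow> bool" where
  "vertex m A \<longleftrightarrow> A \<in> Omega3 m \<and>
     \<not> (\<exists>B\<in>Omega3 m. \<exists>C\<in>Omega3 m. \<exists>t::real. B \<noteq> C \<and> 0 < t \<and> t < 1 \<and>
            A = (\<lambda>\<alpha>. t * B \<alpha> + (1 - t) * C \<alpha>))"

end

theory Submission
  imports Defs
begin

text \<open>
  If x1, x2, x3 take three distinct values at \<alpha>, then every position (\<alpha>, j) of the
  line through \<alpha> in the last coordinate is missing from one of the three supports, while
  the entries of a polystochastic matrix on this line sum to 1. For the counting part,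
  every polystochastic matrix dominates a vertex in support: take one of minimal support
  below it; if it were a proper convex combination tP + (1 - t)Q, moving from it along the
  segment through P or Q until some entry vanishes would shrink the support. A vertex is
  determined by its support, so there are finitely many vertices, and by the first part no
  vertex lies below three members of the family.
\<close>

lemma finite_idx: "finite (idx m)"
proof -
  have "idx m = {xs. set xs \<subseteq> {1,2,3} \<and> length xs = m}"
    unfolding idx_def by auto
  then show ?thesis
    using finite_lists_length_eq[of "{1,2,3::nat}" m] by simp
qed

lemma finite_supp: "finite (supp m A)"
  using finite_idx unfolding supp_def by simp

lemma Omega3_nonneg: "A \<in> Omega3 m \<Longrightarrow> \<alpha> \<in> idx m \<Longrightarrow> 0 \<le> A \<alpha>"
  unfolding Omega3_def polystochastic_def by blast

lemma Omega3_outside_idx: "A \<in> Omega3 m \<Longrightarrow> \<alpha> \<notin> idx m \<Longrightarrow> A \<alpha> = 0"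
  unfolding Omega3_def by blast

lemma Omega3_line_sum:
  "A \<in> Omega3 m \<Longrightarrow> \<alpha> \<in> idx m \<Longrightarrow> i < m \<Longrightarrow> (\<Sum>j\<in>{1,2,3}. A (\<alpha>[i := j])) = 1"
  unfolding Omega3_def polystochastic_def by blast

lemma Omega3_last_line_sum:
  assumes "B \<in> Omega3 (d+1)" "\<alpha> \<in> idx d"
  shows "(\<Sum>j\<in>{1,2,3}. B (\<alpha> @ [j])) = 1"
proof -
  have "\<alpha> @ [1] \<in> idx (d+1)" and "length \<alpha> = d"
    using assms(2) unfolding idx_def by auto
  then show ?thesis
    using Omega3_line_sum[OF assms(1), of "\<alpha> @ [1]" d] by (simp add: list_update_append)
qed

lemma Omega3_last_line_meets_supp:
  assumes "B \<in> Omega3 (d+1)" "\<alpha> \<in> idx d"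
  obtains j where "j \<in> {1,2,3}" "\<alpha> @ [j] \<in> supp (d+1) B"
proof -
  have "\<exists>j\<in>{1,2,3}. B (\<alpha> @ [j]) \<noteq> 0"
    using Omega3_last_line_sum[OF assms] by auto
  moreover have "\<alpha> @ [j] \<in> idx (d+1)" if "j \<in> {1,2,3}" for j
    using assms(2) that unfolding idx_def by auto
  ultimately show thesis
    using that unfolding supp_def by blast
qed

lemma Omega3_supp_not_subset_three_forbidden:
  assumes "S \<subseteq> idx d" "\<alpha> \<in> S" "{x \<alpha>, y \<alpha>, z \<alpha>} = {1,2,3}" "B \<in> Omega3 (d+1)"
  shows "\<not> supp (d+1) B \<subseteq> (idx (d+1) - {\<beta> @ [x \<beta>] | \<beta>. \<beta> \<in> S})
                              \<inter> (idx (d+1) - {\<beta> @ [y \<beta>] | \<beta>. \<beta> \<in> S})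
                              \<inter> (idx (d+1) - {\<beta> @ [z \<beta>] | \<beta>. \<beta> \<in> S})"
    (is "\<not> _ \<subseteq> ?allowed")
proof
  assume sub: "supp (d+1) B \<subseteq> ?allowed"
  have "\<alpha> \<in> idx d"
    using assms(1,2) by blast
  then obtain j where "j \<in> {1,2,3}" and j_supp: "\<alpha> @ [j] \<in> supp (d+1) B"
    by (rule Omega3_last_line_meets_supp[OF assms(4)])
  then have "j = x \<alpha> \<or> j = y \<alpha> \<or> j = z \<alpha>"
    using assms(3) by blast
  moreover have "\<alpha> @ [w \<alpha>] \<in> {\<beta> @ [w \<beta>] | \<beta>. \<beta> \<in> S}" for w :: "nat list \<Rightarrow> nat"
    using assms(2) by blast
  ultimately show False
    using sub j_supp by blast
qed

lemma three_distinct_eq_123: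
  fixes a b c :: nat
  assumes "a \<in> {1,2,3}" "b \<in> {1,2,3}" "c \<in> {1,2,3}" "a \<noteq> b" "a \<noteq> c" "b \<noteq> c"
  shows "{a, b, c} = {1,2,3}"
  using assms by auto

lemma affine_combination_in_Omega3:
  assumes P: "P \<in> Omega3 m" and Q: "Q \<in> Omega3 m"
    and nonneg: "\<And>\<alpha>. \<alpha> \<in> idx m \<Longrightarrow> 0 \<le> (1 - s) * P \<alpha> + s * Q \<alpha>"
  shows "(\<lambda>\<alpha>. (1 - s) * P \<alpha> + s * Q \<alpha>) \<in> Omega3 m"
proof -
  have "(\<Sum>j\<in>{1,2,3}. (1 - s) * P (\<alpha>[i := j]) + s * Q (\<alpha>[i := j])) = 1"
    if "\<alpha> \<in> idx m" "i < m" for \<alpha> i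
    using Omega3_line_sum[OF P that] Omega3_line_sum[OF Q that]
    by (simp add: sum.distrib flip: sum_distrib_left)
  moreover have "(1 - s) * P \<alpha> + s * Q \<alpha> = 0" if "\<alpha> \<notin> idx m" for \<alpha>
    using Omega3_outside_idx[OF P that] Omega3_outside_idx[OF Q that] by simp
  ultimately show ?thesis
    using nonneg unfolding Omega3_def polystochastic_def mem_Collect_eq
    by (intro conjI ballI allI impI) simp_all
qed

lemma supp_subset_supp_pos_combination:
  assumes "P \<in> Omega3 m" "Q \<in> Omega3 m" "0 < a" "0 \<le> b"
  shows "supp m P \<subseteq> supp m (\<lambda>\<alpha>. a * P \<alpha> + b * Q \<alpha>)"
proof
  fix \<alpha> assume "\<alpha> \<in> supp m P"
  then have "\<alpha> \<in> idx m" "0 < P \<alpha>"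
    using Omega3_nonneg[OF assms(1)] unfolding supp_def by force+
  moreover have "0 \<le> Q \<alpha>"
    using Omega3_nonneg[OF assms(2) \<open>\<alpha> \<in> idx m\<close>] .
  ultimately have "0 < a * P \<alpha> + b * Q \<alpha>"
    using assms(3,4) by (intro add_pos_nonneg mult_pos_pos mult_nonneg_nonneg) auto
  with \<open>\<alpha> \<in> idx m\<close> show "\<alpha> \<in> supp m (\<lambda>\<alpha>. a * P \<alpha> + b * Q \<alpha>)"
    unfolding supp_def by simp
qed

lemma eventually_at_right_scaled_le:
  fixes V W :: "'a \<Rightarrow> real"
  assumes "finite I" "\<And>g. g \<in> I \<Longrightarrow> 0 \<le> W g" "\<And>g. g \<in> I \<Longrightarrow> V g \<noteq> 0 \<Longrightarrow> 0 < W g"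
  shows "\<forall>\<^sub>F e in at_right 0. \<forall>g\<in>I. e * V g \<le> W g"
proof (rule eventually_ball_finite[OF assms(1)], intro ballI)
  fix g assume g: "g \<in> I"
  show "\<forall>\<^sub>F e in at_right 0. e * V g \<le> W g"
  proof (cases "V g = 0")
    case True
    then show ?thesis using assms(2)[OF g] by simp
  next
    case False
    have "((\<lambda>e. e * V g) \<longlongrightarrow> 0) (at_right 0)"
      by (auto intro!: tendsto_eq_intros)
    from order_tendstoD(2)[OF this assms(3)[OF g False]] show ?thesis
      by (rule eventually_mono) simp
  qed
qed

lemma vertex_in_Omega3: "vertex m B \<Longrightarrow> B \<in> Omega3 m"
  unfolding vertex_def by blast

lemma vertex_midpoint_eq:
  assumes "vertex m W" "P \<in> Omega3 m" "Q \<in> Omega3 m" "W = (\<lambda>g. (P g + Q g) / 2)"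
  shows "P = Q"
proof (rule ccontr)
  assume "P \<noteq> Q"
  have "W = (\<lambda>g. (1/2) * P g + (1 - 1/2) * Q g)"
    using assms(4) by (simp add: fun_eq_iff field_simps)
  moreover have "(0::real) < 1/2" "(1::real)/2 < 1"
    by simp_all
  ultimately show False
    using assms(1-3) \<open>P \<noteq> Q\<close> unfolding vertex_def by blast
qed

lemma vertex_eq_if_supp_subset:
  assumes W: "vertex m W" and V: "V \<in> Omega3 m" and sub: "supp m V \<subseteq> supp m W"
  shows "V = W"
proof (rule ccontr)
  assume "V \<noteq> W"
  have W_Omega3: "W \<in> Omega3 m"
    using W by (rule vertex_in_Omega3)
  have "\<forall>g\<in>idx m. V g \<noteq> 0 \<longrightarrow> 0 < W g"
    using sub Omega3_nonneg[OF W_Omega3] unfolding supp_def by force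
  then have "\<forall>\<^sub>F e in at_right 0. e \<in> {0<..<1} \<and> (\<forall>g\<in>idx m. e * V g \<le> W g)"
    using finite_idx Omega3_nonneg[OF W_Omega3]
    by (intro eventually_conj eventually_at_right_real eventually_at_right_scaled_le) auto
  then have "\<exists>e. e \<in> {0<..<1} \<and> (\<forall>g\<in>idx m. e * V g \<le> W g)"
    by (rule eventually_happens'[OF trivial_limit_at_right_real])
  then obtain e where e: "0 < e" "e < 1" and le: "\<And>g. g \<in> idx m \<Longrightarrow> e * V g \<le> W g"
    by auto
  \<comment> \<open>W is the midpoint of W \<plusminus> e (W - V).\<close>
  define P where "P = (\<lambda>g. (1 - (- e)) * W g + (- e) * V g)"
  define Q where "Q = (\<lambda>g. (1 - e) * W g + e * V g)"
  have P_Omega3: "P \<in> Omega3 m"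
    unfolding P_def
  proof (rule affine_combination_in_Omega3[OF W_Omega3 V])
    fix g assume "g \<in> idx m"
    with le Omega3_nonneg[OF W_Omega3] e have "e * V g \<le> W g" "0 \<le> e * W g"
      by auto
    then show "0 \<le> (1 - - e) * W g + - e * V g"
      by (simp add: algebra_simps)
  qed
  have Q_Omega3: "Q \<in> Omega3 m"
    unfolding Q_def
    by (rule affine_combination_in_Omega3[OF W_Omega3 V])
      (use Omega3_nonneg[OF W_Omega3] Omega3_nonneg[OF V] e in simp)
  have "W = (\<lambda>g. (P g + Q g) / 2)"
    unfolding P_def Q_def by (simp add: fun_eq_iff field_simps)
  then have "P = Q"
    using vertex_midpoint_eq[OF W P_Omega3 Q_Omega3] by blast
  then have "W g = V g" for g
    using fun_cong[OF \<open>P = Q\<close>, of g] e unfolding P_def Q_def by (simp add: algebra_simps)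
  then show False
    using \<open>V \<noteq> W\<close> by auto
qed

lemma finite_vertices: "finite {B. vertex m B}"
proof -
  have "inj_on (supp m) {B. vertex m B}"
  proof (rule inj_onI)
    fix V W assume "V \<in> {B. vertex m B}" "W \<in> {B. vertex m B}" "supp m V = supp m W"
    then show "V = W"
      using vertex_eq_if_supp_subset vertex_in_Omega3 by simp
  qed
  moreover have "finite (supp m ` {B. vertex m B})"
    by (rule finite_subset[of _ "Pow (idx m)"]) (auto simp: supp_def finite_idx)
  ultimately show ?thesis
    using finite_imageD by blast
qed

lemma Omega3_supp_reduction:
  assumes B: "B \<in> Omega3 m" and R: "R \<in> Omega3 m" and sub: "supp m R \<subseteq> supp m B"
    and "g \<in> idx m" "R g < B g"
  obtains B' where "B' \<in> Omega3 m" "supp m B' \<subset> supp m B"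
proof -
  define E where "E = {g \<in> idx m. R g < B g}"
  define f where "f = (\<lambda>g. B g / (B g - R g))"
  define g0 where "g0 = arg_min_on f E"
  define s where "s = f g0"
  define B' where "B' = (\<lambda>g. (1 - s) * B g + s * R g)"
  \<comment> \<open>B' lies on the ray from B through R, at the first point where an entry vanishes.\<close>
  have "finite E" "E \<noteq> {}"
    using finite_idx assms(4,5) unfolding E_def by auto
  then have "g0 \<in> E" and s_le: "\<And>g. g \<in> E \<Longrightarrow> s \<le> f g"
    unfolding g0_def s_def by (auto intro: arg_min_if_finite(1) arg_min_least)
  then have "g0 \<in> idx m" "R g0 < B g0"
    unfolding E_def by auto
  then have "0 < B g0"
    using Omega3_nonneg[OF R] by force
  then have "0 \<le> s"
    using \<open>R g0 < B g0\<close> unfolding s_def f_def by simp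
  have "B' \<in> Omega3 m"
    unfolding B'_def
  proof (rule affine_combination_in_Omega3[OF B R])
    fix g assume g: "g \<in> idx m"
    show "0 \<le> (1 - s) * B g + s * R g"
    proof (cases "R g < B g")
      case True
      then have "s \<le> B g / (B g - R g)"
        using s_le[of g] g unfolding E_def f_def by simp
      then have "s * (B g - R g) \<le> B g"
        using True by (simp add: le_divide_eq)
      then show ?thesis
        by (simp add: algebra_simps)
    next
      case False
      then have "0 \<le> s * (R g - B g)"
        using \<open>0 \<le> s\<close> by simp
      then show ?thesis
        using Omega3_nonneg[OF B g] by (simp add: algebra_simps)
    qed
  qed
  moreover have "supp m B' \<subseteq> supp m B - {g0}"
  proof
    fix g assume g: "g \<in> supp m B'"
    have "B' g0 = 0"
      using \<open>R g0 < B g0\<close> unfolding B'_def s_def f_def by (simp add: field_simps)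
    moreover have "R g = 0" if "B g = 0"
      using sub g that unfolding supp_def by blast
    ultimately show "g \<in> supp m B - {g0}"
      using g unfolding supp_def B'_def by auto
  qed
  moreover have "g0 \<in> supp m B"
    using \<open>g0 \<in> idx m\<close> \<open>0 < B g0\<close> unfolding supp_def by simp
  ultimately show thesis
    using that by blast
qed

lemma not_vertex_imp_smaller_entry:
  assumes B: "B \<in> Omega3 m" and "\<not> vertex m B"
  obtains R g where "R \<in> Omega3 m" "supp m R \<subseteq> supp m B" "g \<in> idx m" "R g < B g"
proof -
  obtain P Q and t :: real where P: "P \<in> Omega3 m" and Q: "Q \<in> Omega3 m" and "P \<noteq> Q"
    and t: "0 < t" "t < 1" and B_eq: "B = (\<lambda>\<alpha>. t * P \<alpha> + (1 - t) * Q \<alpha>)"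
    using assms unfolding vertex_def by blast
  then obtain g where "P g \<noteq> Q g"
    by auto
  then have g: "g \<in> idx m"
    using Omega3_outside_idx[OF P] Omega3_outside_idx[OF Q] by metis
  have "supp m P \<subseteq> supp m B"
    using supp_subset_supp_pos_combination[OF P Q, of t "1 - t"] t B_eq by simp
  moreover have "supp m Q \<subseteq> supp m B"
    using supp_subset_supp_pos_combination[OF Q P, of "1 - t" t] t B_eq
    by (simp add: add.commute)
  moreover have "P g < B g \<or> Q g < B g"
  proof (cases "P g < Q g")
    case True
    then have "0 < (1 - t) * (Q g - P g)"
      using t by simp
    then show ?thesis
      by (simp add: B_eq algebra_simps)
  next
    case False
    with \<open>P g \<noteq> Q g\<close> have "0 < t * (P g - Q g)"
      using t by simp
    then show ?thesis
      by (simp add: B_eq algebra_simps)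
  qed
  ultimately show thesis
    using that P Q g by blast
qed

lemma exists_vertex_supp_subset:
  assumes "A \<in> Omega3 m"
  shows "\<exists>B. vertex m B \<and> supp m B \<subseteq> supp m A"
  using assms
proof (induction "card (supp m A)" arbitrary: A rule: less_induct)
  case less
  show ?case
  proof (cases "vertex m A")
    case True
    then show ?thesis
      by blast
  next
    case False
    then obtain R g where "R \<in> Omega3 m" "supp m R \<subseteq> supp m A" "g \<in> idx m" "R g < A g"
      using not_vertex_imp_smaller_entry[OF less.prems] by blast
    then obtain A' where A': "A' \<in> Omega3 m" "supp m A' \<subset> supp m A"
      using Omega3_supp_reduction[OF less.prems] by blast
    then have "card (supp m A') < card (supp m A)"
      using finite_supp by (intro psubset_card_mono)
    then obtain B where "vertex m B" "supp m B \<subseteq> supp m A'"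
      using less.hyps A'(1) by blast
    with A'(2) show ?thesis
      by blast
  qed
qed

lemma card_le_2_if_no_three_distinct:
  assumes "\<And>a b c. a \<in> F \<Longrightarrow> b \<in> F \<Longrightarrow> c \<in> F \<Longrightarrow> a \<noteq> b \<Longrightarrow> a \<noteq> c \<Longrightarrow> b \<noteq> c \<Longrightarrow> False"
  shows "card F \<le> 2"
proof (rule ccontr)
  assume "\<not> card F \<le> 2"
  then have "3 \<le> card F"
    by simp
  then obtain T where "T \<subseteq> F" "card T = 3"
    by (rule obtain_subset_with_card_n)
  moreover from \<open>card T = 3\<close> obtain a b c where "T = {a, b, c}" "a \<noteq> b" "b \<noteq> c" "a \<noteq> c"
    unfolding card_3_iff by blast
  ultimately show False
    using assms[of a b c] by blast
qed

lemma card_le_mult_card_image: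
  assumes "finite A" "\<And>b. card {a \<in> A. f a = b} \<le> k"
  shows "card A \<le> k * card (f ` A)"
proof -
  have "card A = card (\<Union>b\<in>f ` A. {a \<in> A. f a = b})"
    by (rule arg_cong[where f = card]) auto
  also have "\<dots> \<le> (\<Sum>b\<in>f ` A. card {a \<in> A. f a = b})"
    using assms(1) by (intro card_UN_le) auto
  also have "\<dots> \<le> (\<Sum>b\<in>f ` A. k)"
    using assms(2) by (intro sum_mono)
  finally show ?thesis
    by (simp add: mult.commute)
qed

lemma card_le_twice_card_vertices:
  assumes S: "S \<subseteq> idx d" and C: "C \<subseteq> S \<rightarrow>\<^sub>E {1,2,3}"
    and separating: "\<And>c1 c2 c3. c1 \<in> C \<Longrightarrow> c2 \<in> C \<Longrightarrow> c3 \<in> C \<Longrightarrow> c1 \<noteq> c2 \<Longrightarrow> c1 \<noteq> c3 \<Longrightarrow> c2 \<noteq> c3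
        \<Longrightarrow> \<exists>\<alpha>\<in>S. c1 \<alpha> \<noteq> c2 \<alpha> \<and> c1 \<alpha> \<noteq> c3 \<alpha> \<and> c2 \<alpha> \<noteq> c3 \<alpha>"
    and A: "\<And>c. c \<in> C \<Longrightarrow> A c \<in> Omega3 (d+1)"
    and supp_A: "\<And>c. c \<in> C \<Longrightarrow> supp (d+1) (A c) = idx (d+1) - {\<beta> @ [c \<beta>] | \<beta>. \<beta> \<in> S}"
  shows "card C \<le> 2 * card {B. vertex (d+1) B}"
proof -
  obtain f where f: "\<And>c. c \<in> C \<Longrightarrow> vertex (d+1) (f c) \<and> supp (d+1) (f c) \<subseteq> supp (d+1) (A c)"
    using exists_vertex_supp_subset[OF A] by metis
  have "finite C"
    using finite_subset[OF S finite_idx] C by (meson finite_PiE finite.intros finite_subset)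
  have "card {c \<in> C. f c = B} \<le> 2" for B
  proof (rule card_le_2_if_no_three_distinct)
    fix c1 c2 c3 assume "c1 \<in> {c \<in> C. f c = B}" "c2 \<in> {c \<in> C. f c = B}" "c3 \<in> {c \<in> C. f c = B}"
      and "c1 \<noteq> c2" "c1 \<noteq> c3" "c2 \<noteq> c3"
    then have c: "c1 \<in> C" "c2 \<in> C" "c3 \<in> C" and f_eq: "f c1 = B" "f c2 = B" "f c3 = B"
      and "\<exists>\<alpha>\<in>S. c1 \<alpha> \<noteq> c2 \<alpha> \<and> c1 \<alpha> \<noteq> c3 \<alpha> \<and> c2 \<alpha> \<noteq> c3 \<alpha>"
      using separating by auto
    then obtain \<alpha> where \<alpha>: "\<alpha> \<in> S" "c1 \<alpha> \<noteq> c2 \<alpha>" "c1 \<alpha> \<noteq> c3 \<alpha>" "c2 \<alpha> \<noteq> c3 \<alpha>"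
      by blast
    with c C have all_values: "{c1 \<alpha>, c2 \<alpha>, c3 \<alpha>} = {1,2,3}"
      by (intro three_distinct_eq_123) auto
    have B_vertex: "vertex (d+1) B"
      and "supp (d+1) B \<subseteq> supp (d+1) (A c1) \<inter> supp (d+1) (A c2) \<inter> supp (d+1) (A c3)"
      using f[OF c(1)] f[OF c(2)] f[OF c(3)] f_eq by auto
    then show False
      using Omega3_supp_not_subset_three_forbidden[where x = c1 and y = c2 and z = c3,
          OF S \<alpha>(1) all_values vertex_in_Omega3[OF B_vertex]]
        supp_A[OF c(1)] supp_A[OF c(2)] supp_A[OF c(3)]
      by simp
  qed
  with \<open>finite C\<close> have "card C \<le> 2 * card (f ` C)"
    by (rule card_le_mult_card_image)
  also have "card (f ` C) \<le> card {B. vertex (d+1) B}"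
    using f finite_vertices by (intro card_mono) auto
  finally show ?thesis
    by simp
qed

theorem mainTheorem10:
  fixes d :: nat and S :: "nat list set"
  assumes "S \<subseteq> idx d" and "S \<noteq> {}"
  shows
   "(\<forall>(x1::nat list \<Rightarrow> nat) x2 x3 A1 A2 A3.
       x1 \<in> S \<rightarrow> {1,2,3} \<and> x2 \<in> S \<rightarrow> {1,2,3} \<and> x3 \<in> S \<rightarrow> {1,2,3} \<and>
       (\<exists>\<alpha>\<in>S. x1 \<alpha> \<noteq> x2 \<alpha> \<and> x1 \<alpha> \<noteq> x3 \<alpha> \<and> x2 \<alpha> \<noteq> x3 \<alpha>) \<and>
       A1 \<in> Omega3 (d+1) \<and> supp (d+1) A1 = idx (d+1) - {\<beta> @ [x1 \<beta>] | \<beta>. \<beta> \<in> S} \<and>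
       A2 \<in> Omega3 (d+1) \<and> supp (d+1) A2 = idx (d+1) - {\<beta> @ [x2 \<beta>] | \<beta>. \<beta> \<in> S} \<and>
       A3 \<in> Omega3 (d+1) \<and> supp (d+1) A3 = idx (d+1) - {\<beta> @ [x3 \<beta>] | \<beta>. \<beta> \<in> S}
       \<longrightarrow> \<not> (\<exists>B. vertex (d+1) B \<and>
                 supp (d+1) B \<subseteq> supp (d+1) A1 \<inter> supp (d+1) A2 \<inter> supp (d+1) A3))
    \<and>
    (\<forall>(C::(nat list \<Rightarrow> nat) set) (A::(nat list \<Rightarrow> nat) \<Rightarrow> nat list \<Rightarrow> real).
       C \<subseteq> (S \<rightarrow>\<^sub>E {1,2,3}) \<and>
       (\<forall>c1\<in>C. \<forall>c2\<in>C. \<forall>c3\<in>C. c1 \<noteq> c2 \<and> c1 \<noteq> c3 \<and> c2 \<noteq> c3 \<longrightarrow>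
           (\<exists>\<alpha>\<in>S. c1 \<alpha> \<noteq> c2 \<alpha> \<and> c1 \<alpha> \<noteq> c3 \<alpha> \<and> c2 \<alpha> \<noteq> c3 \<alpha>)) \<and>
       (\<forall>c\<in>C. A c \<in> Omega3 (d+1) \<and>
                supp (d+1) (A c) = idx (d+1) - {\<beta> @ [c \<beta>] | \<beta>. \<beta> \<in> S})
       \<longrightarrow> real (card C) / 2 \<le> real (card {B. vertex (d+1) B}))"
proof (intro conjI allI impI, goal_cases)
  case (1 x1 x2 x3 A1 A2 A3)
  then obtain \<alpha> where \<alpha>: "\<alpha> \<in> S" "x1 \<alpha> \<noteq> x2 \<alpha>" "x1 \<alpha> \<noteq> x3 \<alpha>" "x2 \<alpha> \<noteq> x3 \<alpha>"
    by (elim conjE bexE) blast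
  with 1 have all_values: "{x1 \<alpha>, x2 \<alpha>, x3 \<alpha>} = {1,2,3}"
    by (intro three_distinct_eq_123) auto
  show ?case
  proof (intro notI, elim exE conjE)
    fix B assume B_vertex: "vertex (d+1) B"
      and "supp (d+1) B \<subseteq> supp (d+1) A1 \<inter> supp (d+1) A2 \<inter> supp (d+1) A3"
    then show False
      using Omega3_supp_not_subset_three_forbidden[where x = x1 and y = x2 and z = x3,
          OF assms(1) \<alpha>(1) all_values vertex_in_Omega3[OF B_vertex]] 1
      by simp
  qed
next
  case (2 C A)
  then have "card C \<le> 2 * card {B. vertex (d+1) B}"
    by (intro card_le_twice_card_vertices[OF assms(1), of C A]) (simp_all add: Ball_def)
  then show ?case
    by simp
qed

end
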